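(* Let $X$ be a finite connected poset and $\theta\in\mathcal{M}(X)$. Then $C\sim D$ implies $\theta(C)\sim\theta(D)$, so $\theta$ induces a map $\widetilde\theta$ on $\mathcal{C}(X)/{\sim}$ sending the class of $C$ to the class of $\theta(C)$, and $\widetilde\theta$ is a bijection. Moreover, if $\theta$ is increasing (resp. decreasing) on $C\in\mathcal{C}(X)$, then it is increasing (resp. decreasing) on every $D\in\mathcal{C}(X)$ with $D\sim C$.
   Context: $\mathcal{C}(X)$ is the set of maximal chains; $\mathrm{Min}(X)$, $\mathrm{Max}(X)$ the minimal and maximal elements. Two maximal chains are linked if they share an element lying in neither $\mathrm{Min}(X)$ nor $\mathrm{Max}(X)$; $\sim$ is the equivalence relation on $\mathcal{C}(X)$ generated by linkedness. For $x<y$, $e_{xy}$ denotes the incidence-algebra basis element and $B=\{e_{xy}:x<y\}$. For a bijection $\theta:B\to B$ and $C:u_1<\dots<u_m$ in $\mathcal{C}(X)$, $\theta$ is increasing on $C$ if there is $D:v_1<\dots<v_m$ in $\mathcal{C}(X)$ with $\theta(e_{u_iu_j})=e_{v_iv_j}$ for all $i<j$, decreasing if $\theta(e_{u_iu_j})=e_{v_{m-j+1}v_{m-i+1}}$ for all $i<j$; in either case write $\theta(C)=D$. $\mathcal{M}(X)$ is the set of bijections $B\to B$ increasing or decreasing on every maximal chain. *)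

theory Defs
  imports Main
begin

text \<open>A finite poset is modelled as a finite carrier set X inside an ordered type,
  with the induced order. The basis element e_xy (x<y) is modelled by the pair (x,y).\<close>

definition poset_connected :: "'a::order set \<Rightarrow> bool" where
  "poset_connected X \<longleftrightarrow> X \<noteq> {} \<and>
     (\<forall>x\<in>X. \<forall>y\<in>X. (x, y) \<in> ({(a, b). a \<in> X \<and> b \<in> X \<and> (a \<le> b \<or> b \<le> a)})\<^sup>*)"

definition is_chain :: "'a::order set \<Rightarrow> 'a set \<Rightarrow> bool" where
  "is_chain X C \<longleftrightarrow> C \<subseteq> X \<and> (\<forall>x\<in>C. \<forall>y\<in>C. x \<le> y \<or> y \<le> x)"

definition max_chains :: "'a::order set \<Rightarrow> 'a set set" where
  "max_chains X = {C. is_chain X C \<and> (\<forall>C'. is_chain X C' \<and> C \<subseteq> C' \<longrightarrow> C' = C)}"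

definition min_elems :: "'a::order set \<Rightarrow> 'a set" where
  "min_elems X = {x \<in> X. \<not> (\<exists>y\<in>X. y < x)}"

definition max_elems :: "'a::order set \<Rightarrow> 'a set" where
  "max_elems X = {x \<in> X. \<not> (\<exists>y\<in>X. x < y)}"

definition linked :: "'a::order set \<Rightarrow> ('a set \<times> 'a set) set" where
  "linked X = {(C, D). C \<in> max_chains X \<and> D \<in> max_chains X \<and>
      (\<exists>x \<in> C \<inter> D. x \<notin> min_elems X \<and> x \<notin> max_elems X)}"

definition chain_equiv :: "'a::order set \<Rightarrow> ('a set \<times> 'a set) set" where
  "chain_equiv X = {(C, D). C \<in> max_chains X \<and> D \<in> max_chains X \<and>
      (C, D) \<in> (linked X \<union> (linked X)\<inverse>)\<^sup>*}"

definition basis :: "'a::order set \<Rightarrow> ('a \<times> 'a) set" where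
  "basis X = {(x, y). x \<in> X \<and> y \<in> X \<and> x < y}"

text \<open>theta is increasing on C with theta(C) = D: listing C as u_1<...<u_m and D as
  v_1<...<v_m, theta(e_{u_i u_j}) = e_{v_i v_j} for all i<j (0-based indices below).\<close>
definition increasing_to :: "'a::order set \<Rightarrow> ('a \<times> 'a \<Rightarrow> 'a \<times> 'a) \<Rightarrow> 'a set \<Rightarrow> 'a set \<Rightarrow> bool" where
  "increasing_to X \<theta> C D \<longleftrightarrow> C \<in> max_chains X \<and> D \<in> max_chains X \<and>
     (\<exists>u v. sorted_wrt (<) u \<and> set u = C \<and> sorted_wrt (<) v \<and> set v = D \<and>
        length u = length v \<and>
        (\<forall>i j. i < j \<and> j < length u \<longrightarrow> \<theta> (u ! i, u ! j) = (v ! i, v ! j)))"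

text \<open>theta is decreasing on C with theta(C) = D: theta(e_{u_i u_j}) = e_{v_{m-j+1} v_{m-i+1}}
  (1-based), i.e. with 0-based indices v!(m-1-j), v!(m-1-i).\<close>
definition decreasing_to :: "'a::order set \<Rightarrow> ('a \<times> 'a \<Rightarrow> 'a \<times> 'a) \<Rightarrow> 'a set \<Rightarrow> 'a set \<Rightarrow> bool" where
  "decreasing_to X \<theta> C D \<longleftrightarrow> C \<in> max_chains X \<and> D \<in> max_chains X \<and>
     (\<exists>u v. sorted_wrt (<) u \<and> set u = C \<and> sorted_wrt (<) v \<and> set v = D \<and>
        length u = length v \<and>
        (\<forall>i j. i < j \<and> j < length u \<longrightarrow>
           \<theta> (u ! i, u ! j) = (v ! (length u - 1 - j), v ! (length u - 1 - i))))"

definition chain_image :: "'a::order set \<Rightarrow> ('a \<times> 'a \<Rightarrow> 'a \<times> 'a) \<Rightarrow> 'a set \<Rightarrow> 'a set \<Rightarrow> bool" where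
  "chain_image X \<theta> C D \<longleftrightarrow> increasing_to X \<theta> C D \<or> decreasing_to X \<theta> C D"

definition M_set :: "'a::order set \<Rightarrow> ('a \<times> 'a \<Rightarrow> 'a \<times> 'a) set" where
  "M_set X = {\<theta>. bij_betw \<theta> (basis X) (basis X) \<and>
      (\<forall>C \<in> max_chains X. \<exists>D. chain_image X \<theta> C D)}"

end

theory Submission
  imports Defs
begin

(* A map \<theta> in M(X) sends the strict pairs of a maximal chain C bijectively onto those of
   \<theta>(C), and these pairs determine a maximal chain of a connected poset; so \<theta>(C) is well
   defined and C \<mapsto> \<theta>(C) is injective, hence bijective on the finitely many maximal chains.
   If C and D are linked through an element x that is neither minimal nor maximal, then the
   part of C below x together with the part of D above x is again a maximal chain E; it
   shares its lowest pair with C and its highest pair with D. The map \<theta> sends an end pair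
   of a chain to an end pair of its image (the corresponding one when increasing, the
   opposite one when decreasing). An end pair of one image chain that is also an end pair of
   another must be the lowest pair of both or the highest pair of both, because its inner
   element is neither minimal nor maximal; in particular the two images are linked. Hence
   \<theta>(C) \<sim> \<theta>(E) \<sim> \<theta>(D) and \<theta> has the same orientation on C, E and D. Induction along
   \<sim> gives the statements about classes and orientation, and the induced map on classes is
   onto, hence bijective. *)

section \<open>Strict pairs of sorted lists\<close>

definition strict_pairs :: "'a::order set \<Rightarrow> ('a \<times> 'a) set" where
  "strict_pairs C = {(a, b). a \<in> C \<and> b \<in> C \<and> a < b}"

lemma strict_sorted_unique:
  fixes xs ys :: "'a::order list"
  assumes "sorted_wrt (<) xs" "sorted_wrt (<) ys" "set xs = set ys"
  shows "xs = ys"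
  using assms
proof (induction xs arbitrary: ys)
  case Nil
  then show ?case by simp
next
  case (Cons x xs)
  then obtain y ys' where ys: "ys = y # ys'"
    by (cases ys) auto
  have "x = y"
  proof (rule ccontr)
    assume "x \<noteq> y"
    then have "x \<in> set ys'" "y \<in> set xs"
      using Cons.prems(3) ys by (metis list.set_intros(1) set_ConsD)+
    then show False
      using Cons.prems(1,2) ys by fastforce
  qed
  moreover have "set xs = set ys'"
    using Cons.prems ys \<open>x = y\<close> by fastforce
  ultimately show ?case
    using Cons ys by simp
qed

lemma strict_sorted_nth_le:
  fixes xs :: "'a::order list"
  assumes "sorted_wrt (<) xs" "i \<le> j" "j < length xs"
  shows "xs ! i \<le> xs ! j"
  using assms sorted_wrt_nth_less[OF assms(1)] by (cases "i = j") (auto intro: less_imp_le)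

lemma strict_pairs_sorted:
  fixes xs :: "'a::order list"
  assumes "sorted_wrt (<) xs"
  shows "strict_pairs (set xs) = {(xs ! i, xs ! j) | i j. i < j \<and> j < length xs}"
proof
  show "{(xs ! i, xs ! j) | i j. i < j \<and> j < length xs} \<subseteq> strict_pairs (set xs)"
    using assms by (auto simp: strict_pairs_def sorted_wrt_nth_less)
  show "strict_pairs (set xs) \<subseteq> {(xs ! i, xs ! j) | i j. i < j \<and> j < length xs}"
  proof clarify
    fix a b assume "(a, b) \<in> strict_pairs (set xs)"
    then obtain i j where ij: "i < length xs" "j < length xs" "xs ! i = a" "xs ! j = b" "a < b"
      by (auto simp: strict_pairs_def in_set_conv_nth)
    then have "i < j"
      using strict_sorted_nth_le[OF assms, of j i] by (meson leD not_le_imp_less)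
    with ij show "\<exists>i j. (a, b) = (xs ! i, xs ! j) \<and> i < j \<and> j < length xs"
      by blast
  qed
qed

lemma strict_pairs_sorted_reversed:
  fixes xs :: "'a::order list"
  assumes "sorted_wrt (<) xs"
  shows "strict_pairs (set xs) =
    {(xs ! (length xs - 1 - j), xs ! (length xs - 1 - i)) | i j. i < j \<and> j < length xs}"
    (is "_ = ?R")
proof -
  let ?r = "\<lambda>i. length xs - 1 - i"
  have "(xs ! i, xs ! j) \<in> ?R" if "i < j" "j < length xs" for i j
  proof -
    have "(xs ! i, xs ! j) = (xs ! ?r (?r i), xs ! ?r (?r j))" "?r j < ?r i" "?r i < length xs"
      using that by auto
    then show ?thesis
      by blast
  qed
  moreover have "(xs ! ?r j, xs ! ?r i) \<in> strict_pairs (set xs)" if "i < j" "j < length xs" for i j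
  proof -
    have "?r j < ?r i" "?r i < length xs"
      using that by auto
    then show ?thesis
      unfolding strict_pairs_sorted[OF assms] by blast
  qed
  ultimately show ?thesis
    unfolding strict_pairs_sorted[OF assms] by blast
qed

definition increasing_on_lists :: "('a \<times> 'a \<Rightarrow> 'a \<times> 'a) \<Rightarrow> 'a list \<Rightarrow> 'a list \<Rightarrow> bool" where
  "increasing_on_lists \<theta> u v \<longleftrightarrow> length u = length v \<and>
     (\<forall>i j. i < j \<and> j < length u \<longrightarrow> \<theta> (u ! i, u ! j) = (v ! i, v ! j))"

definition decreasing_on_lists :: "('a \<times> 'a \<Rightarrow> 'a \<times> 'a) \<Rightarrow> 'a list \<Rightarrow> 'a list \<Rightarrow> bool" where
  "decreasing_on_lists \<theta> u v \<longleftrightarrow> length u = length v \<and>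
     (\<forall>i j. i < j \<and> j < length u \<longrightarrow>
        \<theta> (u ! i, u ! j) = (v ! (length u - 1 - j), v ! (length u - 1 - i)))"

lemma increasing_to_iff_lists:
  "increasing_to X \<theta> C D \<longleftrightarrow> C \<in> max_chains X \<and> D \<in> max_chains X \<and>
     (\<exists>u v. sorted_wrt (<) u \<and> set u = C \<and> sorted_wrt (<) v \<and> set v = D \<and>
        increasing_on_lists \<theta> u v)"
  by (auto simp: increasing_to_def increasing_on_lists_def)

lemma decreasing_to_iff_lists:
  "decreasing_to X \<theta> C D \<longleftrightarrow> C \<in> max_chains X \<and> D \<in> max_chains X \<and>
     (\<exists>u v. sorted_wrt (<) u \<and> set u = C \<and> sorted_wrt (<) v \<and> set v = D \<and>
        decreasing_on_lists \<theta> u v)"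
  by (auto simp: decreasing_to_def decreasing_on_lists_def)

lemma increasing_on_lists_strict_pairs:
  fixes u v :: "'a::order list"
  assumes "sorted_wrt (<) u" "sorted_wrt (<) v" "increasing_on_lists \<theta> u v"
  shows "\<theta> ` strict_pairs (set u) = strict_pairs (set v)"
  using assms(3)
  unfolding strict_pairs_sorted[OF assms(1)] strict_pairs_sorted[OF assms(2)] increasing_on_lists_def
  by (auto simp: image_iff) metis+

lemma decreasing_on_lists_strict_pairs:
  fixes u v :: "'a::order list"
  assumes "sorted_wrt (<) u" "sorted_wrt (<) v" "decreasing_on_lists \<theta> u v"
  shows "\<theta> ` strict_pairs (set u) = strict_pairs (set v)"
  using assms(3)
  unfolding strict_pairs_sorted[OF assms(1)] strict_pairs_sorted_reversed[OF assms(2)]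
    decreasing_on_lists_def
  by (auto simp: image_iff) metis+

lemma chain_image_max_chains:
  "chain_image X \<theta> C D \<Longrightarrow> C \<in> max_chains X \<and> D \<in> max_chains X"
  unfolding chain_image_def increasing_to_def decreasing_to_def by blast

lemma chain_image_strict_pairs:
  "chain_image X \<theta> C D \<Longrightarrow> \<theta> ` strict_pairs C = strict_pairs D"
  unfolding chain_image_def increasing_to_iff_lists decreasing_to_iff_lists
  using increasing_on_lists_strict_pairs decreasing_on_lists_strict_pairs by metis

lemma chain_image_sorted_list:
  assumes "chain_image X \<theta> C D"
  obtains u where "sorted_wrt (<) u" "set u = C"
  using assms unfolding chain_image_def increasing_to_def decreasing_to_def by blast

section \<open>Maximal chains\<close>

lemma max_chains_is_chain: "C \<in> max_chains X \<Longrightarrow> is_chain X C"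
  by (simp add: max_chains_def)

lemma max_chain_memberI:
  assumes "C \<in> max_chains X" "z \<in> X" "\<forall>c\<in>C. z \<le> c \<or> c \<le> z"
  shows "z \<in> C"
proof -
  have "is_chain X (insert z C)"
    using assms max_chains_is_chain by (fastforce simp: is_chain_def)
  then show ?thesis
    using assms(1) unfolding max_chains_def by blast
qed

lemma max_chain_least_in_min_elems:
  fixes C :: "'a::order set"
  assumes "C \<in> max_chains X" "c \<in> C" "\<forall>a\<in>C. c \<le> a"
  shows "c \<in> min_elems X"
proof (rule ccontr)
  assume "c \<notin> min_elems X"
  then obtain y where "y \<in> X" "y < c"
    using assms max_chains_is_chain[OF assms(1)] by (auto simp: min_elems_def is_chain_def)
  moreover from this have "\<forall>a\<in>C. y \<le> a"
    using assms(3) by (meson order.strict_implies_order order.trans)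
  ultimately have "y \<in> C"
    using assms(1) by (blast intro: max_chain_memberI)
  then show False
    using \<open>y < c\<close> assms(3) by (meson leD)
qed

lemma max_chain_greatest_in_max_elems:
  fixes C :: "'a::order set"
  assumes "C \<in> max_chains X" "c \<in> C" "\<forall>a\<in>C. a \<le> c"
  shows "c \<in> max_elems X"
proof (rule ccontr)
  assume "c \<notin> max_elems X"
  then obtain y where "y \<in> X" "c < y"
    using assms max_chains_is_chain[OF assms(1)] by (auto simp: max_elems_def is_chain_def)
  moreover from this have "\<forall>a\<in>C. a \<le> y"
    using assms(3) by (meson order.strict_implies_order order.trans)
  ultimately have "y \<in> C"
    using assms(1) by (blast intro: max_chain_memberI)
  then show False
    using \<open>c < y\<close> assms(3) by (meson leD)
qed

lemma sorted_max_chain_ends: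
  fixes u :: "'a::order list"
  assumes "sorted_wrt (<) u" "set u \<in> max_chains X" "u \<noteq> []"
  shows "u ! 0 \<in> min_elems X" "u ! (length u - 1) \<in> max_elems X"
proof -
  have "\<forall>a\<in>set u. u ! 0 \<le> a" "\<forall>a\<in>set u. a \<le> u ! (length u - 1)"
    by (auto simp: in_set_conv_nth intro!: strict_sorted_nth_le[OF assms(1)])
  then show "u ! 0 \<in> min_elems X" "u ! (length u - 1) \<in> max_elems X"
    using assms(2,3)
    by (auto intro: max_chain_least_in_min_elems max_chain_greatest_in_max_elems)
qed

lemma strict_sorted_interior_not_extremal:
  fixes v :: "'a::order list"
  assumes "sorted_wrt (<) v" "set v \<subseteq> X" "0 < i" "i < length v - 1"
  shows "v ! i \<notin> min_elems X" "v ! i \<notin> max_elems X"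
proof -
  have "v ! (i - 1) < v ! i" "v ! i < v ! (i + 1)"
    using assms by (auto intro: sorted_wrt_nth_less)
  moreover have "v ! (i - 1) \<in> X" "v ! (i + 1) \<in> X"
    using assms by auto
  ultimately show "v ! i \<notin> min_elems X" "v ! i \<notin> max_elems X"
    by (auto simp: min_elems_def max_elems_def)
qed

lemma max_chain_splice:
  fixes C D :: "'a::order set"
  assumes C: "C \<in> max_chains X" and D: "D \<in> max_chains X" and x: "x \<in> C" "x \<in> D"
  shows "{c \<in> C. c \<le> x} \<union> {d \<in> D. x \<le> d} \<in> max_chains X"
proof -
  let ?E = "{c \<in> C. c \<le> x} \<union> {d \<in> D. x \<le> d}"
  have chains: "is_chain X C" "is_chain X D"
    using C D by (simp_all add: max_chains_is_chain)
  then have "is_chain X ?E"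
    unfolding is_chain_def by (blast intro: order.trans)
  moreover have "C' \<subseteq> ?E" if C': "is_chain X C'" "?E \<subseteq> C'" for C'
  proof
    fix z assume "z \<in> C'"
    moreover have "x \<in> C'"
      using x C' by auto
    ultimately have z: "z \<in> X" "z \<le> x \<or> x \<le> z"
      using C' by (auto simp: is_chain_def)
    from z(2) show "z \<in> ?E"
    proof
      assume "z \<le> x"
      have "z \<le> c \<or> c \<le> z" if "c \<in> C" for c
      proof (cases "c \<le> x")
        case True
        then have "c \<in> C'"
          using that C'(2) by blast
        then show ?thesis
          using C'(1) \<open>z \<in> C'\<close> by (simp add: is_chain_def)
      next
        case False
        then have "x \<le> c"
          using that x chains(1) by (auto simp: is_chain_def)
        then show ?thesis
          using \<open>z \<le> x\<close> by (blast intro: order.trans)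
      qed
      then have "z \<in> C"
        using C z(1) by (blast intro: max_chain_memberI)
      with \<open>z \<le> x\<close> show ?thesis
        by blast
    next
      assume "x \<le> z"
      have "z \<le> d \<or> d \<le> z" if "d \<in> D" for d
      proof (cases "x \<le> d")
        case True
        then have "d \<in> C'"
          using that C'(2) by blast
        then show ?thesis
          using C'(1) \<open>z \<in> C'\<close> by (simp add: is_chain_def)
      next
        case False
        then have "d \<le> x"
          using that x chains(2) by (auto simp: is_chain_def)
        then show ?thesis
          using \<open>x \<le> z\<close> by (blast intro: order.trans)
      qed
      then have "z \<in> D"
        using D z(1) by (blast intro: max_chain_memberI)
      with \<open>x \<le> z\<close> show ?thesis
        by blast
    qed
  qed
  ultimately show ?thesis
    unfolding max_chains_def by blast
qed

lemma max_chain_without_strict_pairs: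
  fixes C :: "'a::order set"
  assumes X: "poset_connected X" and C: "C \<in> max_chains X" and "strict_pairs C = {}"
  shows "C = X"
proof -
  obtain c where "c \<in> X"
    using X by (auto simp: poset_connected_def)
  have "C \<noteq> {}"
    using C \<open>c \<in> X\<close> max_chain_memberI by fastforce
  moreover have "a = b" if "a \<in> C" "b \<in> C" for a b
    using that assms(3) max_chains_is_chain[OF C]
    by (auto simp: strict_pairs_def is_chain_def order.order_iff_strict)
  ultimately obtain c where C_eq: "C = {c}"
    by blast
  have "y \<in> C" if "y \<in> X" for y
  proof -
    have "(c, y) \<in> {(a, b). a \<in> X \<and> b \<in> X \<and> (a \<le> b \<or> b \<le> a)}\<^sup>*"
      using X that C_eq max_chains_is_chain[OF C] by (auto simp: poset_connected_def is_chain_def)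
    then show ?thesis
    proof (induction rule: rtrancl_induct)
      case base
      then show ?case
        using C_eq by simp
    next
      case (step a b)
      then have "\<forall>c'\<in>C. b \<le> c' \<or> c' \<le> b"
        using C_eq by auto
      then show ?case
        using max_chain_memberI[OF C] step(2) by blast
    qed
  qed
  then show ?thesis
    using max_chains_is_chain[OF C] by (auto simp: is_chain_def)
qed

lemma max_chains_eq_if_strict_pairs_eq:
  fixes C D :: "'a::order set"
  assumes "poset_connected X" "C \<in> max_chains X" "D \<in> max_chains X"
    and "strict_pairs C = strict_pairs D"
  shows "C = D"
proof (cases "strict_pairs C = {}")
  case True
  then show ?thesis
    using assms max_chain_without_strict_pairs by metis
next
  case False
  have "E = fst ` strict_pairs E \<union> snd ` strict_pairs E"
    if E: "E \<in> max_chains X" "strict_pairs E \<noteq> {}" for E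
  proof -
    obtain a b where ab: "(a, b) \<in> strict_pairs E"
      using E(2) by auto
    have "e \<in> fst ` strict_pairs E \<union> snd ` strict_pairs E" if "e \<in> E" for e
    proof -
      have "e = a \<or> e < a \<or> a < e"
        using max_chains_is_chain[OF E(1)] that ab
        by (auto simp: strict_pairs_def is_chain_def order.order_iff_strict)
      then show ?thesis
        using that ab unfolding strict_pairs_def by (auto intro: rev_image_eqI)
    qed
    then show ?thesis
      by (auto simp: strict_pairs_def)
  qed
  then show ?thesis
    using False assms by metis
qed

lemma equiv_chain_equiv: "equiv (max_chains X) (chain_equiv X)"
proof -
  let ?S = "linked X \<union> (linked X)\<inverse>"
  have "sym (?S\<^sup>*)"
    by (simp add: sym_Un_converse sym_rtrancl)
  then show ?thesis
    unfolding chain_equiv_def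
    by (auto simp: equiv_def refl_on_def sym_def trans_def intro: rtrancl_trans)
qed

lemma linked_subset_chain_equiv: "linked X \<subseteq> chain_equiv X"
  by (auto simp: chain_equiv_def linked_def)

lemma chain_equiv_sym: "(C, D) \<in> chain_equiv X \<Longrightarrow> (D, C) \<in> chain_equiv X"
  using equiv_chain_equiv by (meson equiv_def symE)

lemma chain_equiv_trans:
  "(C, D) \<in> chain_equiv X \<Longrightarrow> (D, E) \<in> chain_equiv X \<Longrightarrow> (C, E) \<in> chain_equiv X"
  using equiv_chain_equiv by (meson equiv_def transE)

section \<open>End pairs of maximal chains\<close>

definition first_pair :: "'a list \<Rightarrow> 'a \<times> 'a" where
  "first_pair v = (v ! 0, v ! 1)"

definition last_pair :: "'a list \<Rightarrow> 'a \<times> 'a" where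
  "last_pair v = (v ! (length v - 2), v ! (length v - 1))"

lemma first_pair_ne_last_pair:
  fixes v :: "'a::order list"
  assumes "sorted_wrt (<) v" "3 \<le> length v"
  shows "first_pair v \<noteq> last_pair v"
proof -
  have "v ! 1 < v ! (length v - 1)"
    using assms by (intro sorted_wrt_nth_less[OF assms(1)]) auto
  then show ?thesis
    by (auto simp: first_pair_def last_pair_def)
qed

lemma increasing_on_lists_end_pairs:
  assumes "increasing_on_lists \<theta> u v" "2 \<le> length u"
  shows "\<theta> (first_pair u) = first_pair v" "\<theta> (last_pair u) = last_pair v"
proof -
  have "0 < (1::nat)" "1 < length u" "length u - 2 < length u - 1" "length u - 1 < length u"
    using assms(2) by auto
  then show "\<theta> (first_pair u) = first_pair v" "\<theta> (last_pair u) = last_pair v"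
    using assms(1) unfolding increasing_on_lists_def first_pair_def last_pair_def by metis+
qed

lemma decreasing_on_lists_end_pairs:
  assumes "decreasing_on_lists \<theta> u v" "2 \<le> length u"
  shows "\<theta> (first_pair u) = last_pair v" "\<theta> (last_pair u) = first_pair v"
proof -
  have "0 < (1::nat)" "1 < length u" "length u - 2 < length u - 1" "length u - 1 < length u"
    "length u - 1 - 0 = length u - 1" "length u - 1 - 1 = length u - 2"
    "length u - 1 - (length u - 2) = 1" "length u - 1 - (length u - 1) = 0"
    using assms(2) by auto
  then show "\<theta> (first_pair u) = last_pair v" "\<theta> (last_pair u) = first_pair v"
    using assms(1) unfolding decreasing_on_lists_def first_pair_def last_pair_def by metis+
qed

lemma shared_end_pair:
  fixes v y :: "'a::order list"
  assumes v: "sorted_wrt (<) v" "set v \<in> max_chains X" "3 \<le> length v"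
    and y: "sorted_wrt (<) y" "set y \<in> max_chains X" "3 \<le> length y"
    and t: "t \<in> {first_pair v, last_pair v}" "t \<in> {first_pair y, last_pair y}"
  shows "(set v, set y) \<in> linked X"
    and "t = first_pair v \<longleftrightarrow> t = first_pair y"
    and "t = last_pair v \<longleftrightarrow> t = last_pair y"
proof -
  have interior: "w ! 1 \<in> set w" "w ! 1 \<notin> min_elems X" "w ! 1 \<notin> max_elems X"
    "w ! (length w - 2) \<in> set w"
    "w ! (length w - 2) \<notin> min_elems X" "w ! (length w - 2) \<notin> max_elems X"
    "w ! (length w - 1) \<in> max_elems X"
    if w: "sorted_wrt (<) w" "set w \<in> max_chains X" "3 \<le> length w" for w :: "'a list"
  proof -
    have "set w \<subseteq> X"
      using max_chains_is_chain[OF w(2)] by (simp add: is_chain_def)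
    moreover have "0 < (1::nat)" "1 < length w - 1" "0 < length w - 2" "length w - 2 < length w - 1"
      "w \<noteq> []"
      using w(3) by auto
    ultimately show "w ! 1 \<in> set w" "w ! 1 \<notin> min_elems X" "w ! 1 \<notin> max_elems X"
      "w ! (length w - 2) \<in> set w"
      "w ! (length w - 2) \<notin> min_elems X" "w ! (length w - 2) \<notin> max_elems X"
      "w ! (length w - 1) \<in> max_elems X"
      using strict_sorted_interior_not_extremal[OF w(1)] sorted_max_chain_ends(2)[OF w(1,2)]
      by simp_all
  qed
  note iv = interior[OF v] and iy = interior[OF y]
  show first: "t = first_pair v \<longleftrightarrow> t = first_pair y"
    using t iv iy by (auto simp: first_pair_def last_pair_def)
  show "t = last_pair v \<longleftrightarrow> t = last_pair y"
    using t first first_pair_ne_last_pair[OF v(1,3)] first_pair_ne_last_pair[OF y(1,3)] by auto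
  have "\<exists>a \<in> set v \<inter> set y. a \<notin> min_elems X \<and> a \<notin> max_elems X"
  proof (cases "t = first_pair v")
    case True
    then have "v ! 1 = y ! 1"
      using first by (simp add: first_pair_def)
    then show ?thesis
      using iv(1-3) iy(1) by auto
  next
    case False
    then have "v ! (length v - 2) = y ! (length y - 2)"
      using t first by (auto simp: last_pair_def)
    then show ?thesis
      using iv(4-6) iy(4) by auto
  qed
  then show "(set v, set y) \<in> linked X"
    using v(2) y(2) by (simp add: linked_def)
qed

lemma first_pair_append:
  "xs \<noteq> [] \<Longrightarrow> first_pair (xs @ y # ys) = first_pair (xs @ y # zs)"
  by (cases xs; cases "tl xs") (auto simp: first_pair_def)

lemma last_pair_append:
  "ys \<noteq> [] \<Longrightarrow> last_pair (xs @ y # ys) = last_pair (zs @ y # ys)"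
  by (cases ys rule: rev_cases; cases "butlast ys" rule: rev_cases)
    (auto simp: last_pair_def nth_append)

lemma sorted_max_chain_split_interior:
  fixes u :: "'a::order list"
  assumes "sorted_wrt (<) u" "set u \<in> max_chains X" "u = u1 @ x # u2"
    and "x \<notin> min_elems X" "x \<notin> max_elems X"
  shows "u1 \<noteq> []" "u2 \<noteq> []"
  using assms sorted_max_chain_ends[OF assms(1,2)] by (auto simp: nth_append)

lemma sorted_splice:
  fixes u1 u2 w1 w2 :: "'a::order list"
  assumes "sorted_wrt (<) (u1 @ x # u2)" "sorted_wrt (<) (w1 @ x # w2)"
  shows "sorted_wrt (<) (u1 @ x # w2)"
    and "set (u1 @ x # w2) =
      {c \<in> set (u1 @ x # u2). c \<le> x} \<union> {d \<in> set (w1 @ x # w2). x \<le> d}"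
proof -
  have below: "\<forall>a\<in>set u1. a < x" "\<forall>a\<in>set w1. a < x"
    and above: "\<forall>b\<in>set u2. x < b" "\<forall>b\<in>set w2. x < b"
    and "sorted_wrt (<) u1" "sorted_wrt (<) (x # w2)"
    using assms by (auto simp: sorted_wrt_append)
  then show "sorted_wrt (<) (u1 @ x # w2)"
    by (auto simp: sorted_wrt_append) (meson order.strict_trans)
  show "set (u1 @ x # w2) =
      {c \<in> set (u1 @ x # u2). c \<le> x} \<union> {d \<in> set (w1 @ x # w2). x \<le> d}"
    using below above by (auto dest: leD less_imp_le)
qed

section \<open>The action of M(X) on maximal chains\<close>

locale M_map =
  fixes X :: "'a::order set" and \<theta> :: "'a \<times> 'a \<Rightarrow> 'a \<times> 'a"
  assumes connected: "poset_connected X" and in_M: "\<theta> \<in> M_set X"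
begin

definition mapped_chain :: "'a set \<Rightarrow> 'a set" where
  "mapped_chain C = (SOME D. chain_image X \<theta> C D)"

definition increasing_on :: "'a set \<Rightarrow> bool" where
  "increasing_on C \<longleftrightarrow> (\<exists>D. increasing_to X \<theta> C D)"

definition decreasing_on :: "'a set \<Rightarrow> bool" where
  "decreasing_on C \<longleftrightarrow> (\<exists>D. decreasing_to X \<theta> C D)"

lemma chain_image_mapped_chain:
  "C \<in> max_chains X \<Longrightarrow> chain_image X \<theta> C (mapped_chain C)"
  using in_M unfolding M_set_def mapped_chain_def by (blast intro: someI_ex)

lemma mapped_chain_in_max_chains:
  "C \<in> max_chains X \<Longrightarrow> mapped_chain C \<in> max_chains X"
  using chain_image_mapped_chain chain_image_max_chains by blast

lemma chain_image_eq_mapped_chain: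
  assumes "chain_image X \<theta> C D"
  shows "D = mapped_chain C"
proof -
  have "C \<in> max_chains X" "D \<in> max_chains X"
    using chain_image_max_chains[OF assms] by auto
  moreover have "strict_pairs D = strict_pairs (mapped_chain C)"
    using chain_image_strict_pairs[OF assms]
      chain_image_strict_pairs[OF chain_image_mapped_chain[OF \<open>C \<in> max_chains X\<close>]] by simp
  ultimately show ?thesis
    using max_chains_eq_if_strict_pairs_eq[OF connected] mapped_chain_in_max_chains by blast
qed

lemma max_chain_sorted_list:
  assumes "C \<in> max_chains X"
  obtains u where "sorted_wrt (<) u" "set u = C"
  using chain_image_sorted_list[OF chain_image_mapped_chain[OF assms]] by blast

lemma inj_on_mapped_chain: "inj_on mapped_chain (max_chains X)"
proof (rule inj_onI)
  fix C D assume C: "C \<in> max_chains X" and D: "D \<in> max_chains X"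
    and eq: "mapped_chain C = mapped_chain D"
  have "\<theta> ` strict_pairs C = \<theta> ` strict_pairs D"
    using chain_image_strict_pairs chain_image_mapped_chain C D eq by metis
  moreover have "inj_on \<theta> (basis X)"
    using in_M by (simp add: M_set_def bij_betw_def)
  moreover have "strict_pairs C \<subseteq> basis X" "strict_pairs D \<subseteq> basis X"
    using max_chains_is_chain[OF C] max_chains_is_chain[OF D]
    by (auto simp: strict_pairs_def basis_def is_chain_def)
  ultimately have "strict_pairs C = strict_pairs D"
    by (simp add: inj_on_image_eq_iff)
  then show "C = D"
    using max_chains_eq_if_strict_pairs_eq[OF connected C D] by blast
qed

lemma orientation_iff_lists:
  assumes "C \<in> max_chains X" "sorted_wrt (<) u" "set u = C"
    and "sorted_wrt (<) v" "set v = mapped_chain C"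
  shows "increasing_on C \<longleftrightarrow> increasing_on_lists \<theta> u v"
    and "decreasing_on C \<longleftrightarrow> decreasing_on_lists \<theta> u v"
proof -
  have mapped: "mapped_chain C \<in> max_chains X"
    using mapped_chain_in_max_chains[OF assms(1)] .
  have unique: "u' = u" "v' = v"
    if "sorted_wrt (<) u'" "set u' = C" "sorted_wrt (<) v'" "set v' = mapped_chain C" for u' v'
    using that assms strict_sorted_unique by metis+
  show "increasing_on C \<longleftrightarrow> increasing_on_lists \<theta> u v"
    using assms mapped unique chain_image_eq_mapped_chain
    unfolding increasing_on_def increasing_to_iff_lists chain_image_def by metis
  show "decreasing_on C \<longleftrightarrow> decreasing_on_lists \<theta> u v"
    using assms mapped unique chain_image_eq_mapped_chain
    unfolding decreasing_on_def decreasing_to_iff_lists chain_image_def by metis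
qed

lemma end_pairs_mapped_chain:
  assumes C: "C \<in> max_chains X" "sorted_wrt (<) u" "set u = C" "3 \<le> length u"
    and v: "sorted_wrt (<) v" "set v = mapped_chain C"
  shows "3 \<le> length v"
    and "\<theta> (first_pair u) \<in> {first_pair v, last_pair v}"
    and "\<theta> (last_pair u) \<in> {first_pair v, last_pair v}"
    and "increasing_on C \<longleftrightarrow> \<theta> (first_pair u) = first_pair v"
    and "increasing_on C \<longleftrightarrow> \<theta> (last_pair u) = last_pair v"
    and "decreasing_on C \<longleftrightarrow> \<not> increasing_on C"
proof -
  note lists = orientation_iff_lists[OF C(1-3) v]
  have either: "increasing_on_lists \<theta> u v \<or> decreasing_on_lists \<theta> u v"
    using chain_image_mapped_chain[OF C(1)] lists
    unfolding chain_image_def increasing_on_def decreasing_on_def by blast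
  then have "length v = length u"
    by (auto simp: increasing_on_lists_def decreasing_on_lists_def)
  then show "3 \<le> length v"
    using C(4) by simp
  then have ne: "first_pair v \<noteq> last_pair v"
    using first_pair_ne_last_pair[OF v(1)] by blast
  have "2 \<le> length u"
    using C(4) by simp
  note inc = increasing_on_lists_end_pairs[of \<theta> u v, OF _ this]
    and dec = decreasing_on_lists_end_pairs[of \<theta> u v, OF _ this]
  show "\<theta> (first_pair u) \<in> {first_pair v, last_pair v}"
    and "\<theta> (last_pair u) \<in> {first_pair v, last_pair v}"
    using either inc dec by auto
  show "increasing_on C \<longleftrightarrow> \<theta> (first_pair u) = first_pair v"
    and "increasing_on C \<longleftrightarrow> \<theta> (last_pair u) = last_pair v"
    and "decreasing_on C \<longleftrightarrow> \<not> increasing_on C"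
    using either inc dec ne unfolding lists by auto
qed

lemma linked_splice_lists:
  assumes "(C, D) \<in> linked X"
  obtains u w e where "sorted_wrt (<) u" "set u = C" "3 \<le> length u"
    and "sorted_wrt (<) w" "set w = D" "3 \<le> length w"
    and "sorted_wrt (<) e" "set e \<in> max_chains X" "3 \<le> length e"
    and "first_pair e = first_pair u" "last_pair e = last_pair w"
proof -
  obtain x where C: "C \<in> max_chains X" and D: "D \<in> max_chains X"
    and x: "x \<in> C" "x \<in> D" "x \<notin> min_elems X" "x \<notin> max_elems X"
    using assms unfolding linked_def by blast
  obtain u w where u: "sorted_wrt (<) u" "set u = C" and w: "sorted_wrt (<) w" "set w = D"
    using max_chain_sorted_list C D by metis
  obtain u1 u2 w1 w2 where u_split: "u = u1 @ x # u2" and w_split: "w = w1 @ x # w2"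
    using x(1,2) u(2) w(2) split_list by metis
  have nonempty: "u1 \<noteq> []" "u2 \<noteq> []" "w1 \<noteq> []" "w2 \<noteq> []"
    using sorted_max_chain_split_interior[OF u(1) _ u_split x(3,4)]
      sorted_max_chain_split_interior[OF w(1) _ w_split x(3,4)] C D u(2) w(2) by auto
  define e where "e = u1 @ x # w2"
  have "sorted_wrt (<) e" "set e \<in> max_chains X"
    using sorted_splice[of u1 x u2 w1 w2] max_chain_splice[OF C D x(1,2)] u w u_split w_split
    unfolding e_def by auto
  moreover have "first_pair e = first_pair u" "last_pair e = last_pair w"
    unfolding e_def u_split w_split
    by (rule first_pair_append[OF nonempty(1)], rule last_pair_append[OF nonempty(4)])
  moreover have "3 \<le> length u" "3 \<le> length w" "3 \<le> length e"
    using nonempty[folded length_greater_0_conv] unfolding u_split w_split e_def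
    by (simp_all only: length_append length_Cons)
  ultimately show ?thesis
    using that u w by blast
qed

lemma linked_mapped_chains:
  assumes "(C, D) \<in> linked X"
  shows "(mapped_chain C, mapped_chain D) \<in> chain_equiv X"
    and "increasing_on C \<longleftrightarrow> increasing_on D"
    and "decreasing_on C \<longleftrightarrow> decreasing_on D"
proof -
  obtain u w e where u: "sorted_wrt (<) u" "set u = C" "3 \<le> length u"
    and w: "sorted_wrt (<) w" "set w = D" "3 \<le> length w"
    and e: "sorted_wrt (<) e" "set e \<in> max_chains X" "3 \<le> length e"
    and ends: "first_pair e = first_pair u" "last_pair e = last_pair w"
    using linked_splice_lists[OF assms] .
  have C: "C \<in> max_chains X" and D: "D \<in> max_chains X"
    using assms by (auto simp: linked_def)
  obtain v where v: "sorted_wrt (<) v" "set v = mapped_chain C"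
    using max_chain_sorted_list[OF mapped_chain_in_max_chains[OF C]] .
  obtain y where y: "sorted_wrt (<) y" "set y = mapped_chain (set e)"
    using max_chain_sorted_list[OF mapped_chain_in_max_chains[OF e(2)]] .
  obtain z where z: "sorted_wrt (<) z" "set z = mapped_chain D"
    using max_chain_sorted_list[OF mapped_chain_in_max_chains[OF D]] .
  note pC = end_pairs_mapped_chain[OF C u(1,2,3) v]
    and pE = end_pairs_mapped_chain[OF e(2) e(1) refl e(3) y]
    and pD = end_pairs_mapped_chain[OF D w(1,2,3) z]
  have mapped: "set v \<in> max_chains X" "set y \<in> max_chains X" "set z \<in> max_chains X"
    using mapped_chain_in_max_chains C D e(2) v(2) y(2) z(2) by simp_all
  have "\<theta> (first_pair u) \<in> {first_pair y, last_pair y}"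
    "\<theta> (last_pair w) \<in> {first_pair y, last_pair y}"
    using pE(2,3) ends by simp_all
  note CE = shared_end_pair[OF v(1) mapped(1) pC(1) y(1) mapped(2) pE(1) pC(2) this(1)]
    and ED = shared_end_pair[OF y(1) mapped(2) pE(1) z(1) mapped(3) pD(1) this(2) pD(3)]
  have "(mapped_chain C, mapped_chain (set e)) \<in> chain_equiv X"
    "(mapped_chain (set e), mapped_chain D) \<in> chain_equiv X"
    using CE(1) ED(1) linked_subset_chain_equiv unfolding v(2) y(2) z(2) by blast+
  then show "(mapped_chain C, mapped_chain D) \<in> chain_equiv X"
    by (rule chain_equiv_trans)
  have "increasing_on C \<longleftrightarrow> increasing_on (set e)"
    unfolding pC(4) pE(4) ends(1) by (rule CE(2))
  also have "\<dots> \<longleftrightarrow> increasing_on D"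
    unfolding pE(5) pD(5) ends(2) by (rule ED(3))
  finally show inc: "increasing_on C \<longleftrightarrow> increasing_on D" .
  show "decreasing_on C \<longleftrightarrow> decreasing_on D"
    unfolding pC(6) pD(6) inc ..
qed

lemma chain_equiv_mapped_chains:
  assumes "(C, D) \<in> chain_equiv X"
  shows "(mapped_chain C, mapped_chain D) \<in> chain_equiv X"
    and "increasing_on C \<longleftrightarrow> increasing_on D"
    and "decreasing_on C \<longleftrightarrow> decreasing_on D"
proof -
  have C: "C \<in> max_chains X" and path: "(C, D) \<in> (linked X \<union> (linked X)\<inverse>)\<^sup>*"
    using assms by (auto simp: chain_equiv_def)
  from path have "(mapped_chain C, mapped_chain D) \<in> chain_equiv X \<and>
      (increasing_on C \<longleftrightarrow> increasing_on D) \<and> (decreasing_on C \<longleftrightarrow> decreasing_on D)"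
  proof (induction rule: rtrancl_induct)
    case base
    show ?case
      using mapped_chain_in_max_chains[OF C] by (simp add: chain_equiv_def)
  next
    case (step B E)
    have "(mapped_chain B, mapped_chain E) \<in> chain_equiv X \<and>
        (increasing_on B \<longleftrightarrow> increasing_on E) \<and> (decreasing_on B \<longleftrightarrow> decreasing_on E)"
      using step.hyps(2) linked_mapped_chains[of B E] linked_mapped_chains[of E B]
      by (auto intro: chain_equiv_sym)
    with step.IH show ?case
      by (blast intro: chain_equiv_trans)
  qed
  then show "(mapped_chain C, mapped_chain D) \<in> chain_equiv X"
    and "increasing_on C \<longleftrightarrow> increasing_on D"
    and "decreasing_on C \<longleftrightarrow> decreasing_on D"
    by blast+
qed

definition induced_map :: "'a set set \<Rightarrow> 'a set set" where
  "induced_map Q = (\<Union>C\<in>Q. chain_equiv X `` {mapped_chain C})"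

lemma induced_map_class:
  assumes "C \<in> max_chains X"
  shows "induced_map (chain_equiv X `` {C}) = chain_equiv X `` {mapped_chain C}"
proof -
  have "(\<lambda>C. chain_equiv X `` {mapped_chain C}) respects chain_equiv X"
    by (rule congruentI) (rule equiv_class_eq[OF equiv_chain_equiv chain_equiv_mapped_chains(1)])
  then show ?thesis
    unfolding induced_map_def using UN_equiv_class[OF equiv_chain_equiv _ assms] by blast
qed

lemma bij_betw_induced_map:
  assumes "finite X"
  shows "bij_betw induced_map (max_chains X // chain_equiv X) (max_chains X // chain_equiv X)"
proof -
  let ?M = "max_chains X"
  have "?M \<subseteq> Pow X"
    by (auto simp: max_chains_def is_chain_def)
  then have "finite ?M"
    using assms by (simp add: finite_subset)
  then have mapped: "mapped_chain ` ?M = ?M"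
    by (rule endo_inj_surj[OF _ _ inj_on_mapped_chain]) (auto intro: mapped_chain_in_max_chains)
  have classes: "?M // chain_equiv X = (\<lambda>C. chain_equiv X `` {C}) ` ?M"
    by (auto simp: quotient_def)
  have "induced_map ` (?M // chain_equiv X) = (\<lambda>C. chain_equiv X `` {mapped_chain C}) ` ?M"
    unfolding classes image_image by (rule image_cong) (simp_all add: induced_map_class)
  also have "\<dots> = ?M // chain_equiv X"
    unfolding classes by (subst (2) mapped[symmetric]) (simp add: image_image)
  finally have onto: "induced_map ` (?M // chain_equiv X) = ?M // chain_equiv X" .
  moreover have "finite (?M // chain_equiv X)"
    using \<open>finite ?M\<close> by (rule finite_quotient) (auto simp: chain_equiv_def)
  ultimately show ?thesis
    unfolding bij_betw_def by (simp add: finite_surj_inj)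
qed

end

theorem lemma3p7:
  fixes X :: "'a::order set" and \<theta> :: "'a \<times> 'a \<Rightarrow> 'a \<times> 'a"
  assumes "finite X" and "poset_connected X" and "\<theta> \<in> M_set X"
  shows "(\<forall>C D C' D'. (C, D) \<in> chain_equiv X \<longrightarrow> chain_image X \<theta> C C' \<longrightarrow>
            chain_image X \<theta> D D' \<longrightarrow> (C', D') \<in> chain_equiv X)
       \<and> (\<exists>f. bij_betw f (max_chains X // chain_equiv X) (max_chains X // chain_equiv X) \<and>
            (\<forall>C C'. chain_image X \<theta> C C' \<longrightarrow>
               f (chain_equiv X `` {C}) = chain_equiv X `` {C'}))
       \<and> (\<forall>C C' D. increasing_to X \<theta> C C' \<longrightarrow> (C, D) \<in> chain_equiv X \<longrightarrow>
            (\<exists>D'. increasing_to X \<theta> D D'))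
       \<and> (\<forall>C C' D. decreasing_to X \<theta> C C' \<longrightarrow> (C, D) \<in> chain_equiv X \<longrightarrow>
            (\<exists>D'. decreasing_to X \<theta> D D'))"
proof -
  interpret M_map X \<theta>
    using assms(2,3) by unfold_locales
  have "(C', D') \<in> chain_equiv X"
    if "(C, D) \<in> chain_equiv X" "chain_image X \<theta> C C'" "chain_image X \<theta> D D'" for C D C' D'
    using chain_equiv_mapped_chains(1)[OF that(1)]
    unfolding chain_image_eq_mapped_chain[OF that(2)] chain_image_eq_mapped_chain[OF that(3)] .
  moreover have "induced_map (chain_equiv X `` {C}) = chain_equiv X `` {C'}"
    if "chain_image X \<theta> C C'" for C C'
    using induced_map_class chain_image_max_chains[OF that]
    unfolding chain_image_eq_mapped_chain[OF that] by blast
  moreover have "increasing_on D" if "increasing_to X \<theta> C C'" "(C, D) \<in> chain_equiv X" for C C' D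
    using chain_equiv_mapped_chains(2)[OF that(2)] that(1) unfolding increasing_on_def by blast
  moreover have "decreasing_on D" if "decreasing_to X \<theta> C C'" "(C, D) \<in> chain_equiv X" for C C' D
    using chain_equiv_mapped_chains(3)[OF that(2)] that(1) unfolding decreasing_on_def by blast
  ultimately show ?thesis
    using bij_betw_induced_map[OF assms(1)] unfolding increasing_on_def decreasing_on_def by blast
qed

end
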